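(* Let $d\ge 2$ and let $X\in\mathbb{R}^d$ be a random vector with $\mathbb{E}\|X\|<\infty$. Then $X$ is spherically symmetric if and only if for every $c\in\mathbb{R}$ and all $u,v\in\mathcal{S}_{d-1}$, $$\mathbb{E}\big[(v-(v^\top u)u)^\top X\,\mathbf{1}_{\{u^\top X\ge c\}}\big]=0 .$$
   Context: $\mathcal{S}_{d-1}=\{x\in\mathbb{R}^d:\|x\|=1\}$ is the unit sphere (Euclidean norm). A random vector $X\in\mathbb{R}^d$ is spherically symmetric if $\Gamma X$ has the same distribution as $X$ for every orthogonal $d\times d$ matrix $\Gamma$ (i.e. $\Gamma^{-1}=\Gamma^\top$). *)

theory Defs
  imports "HOL-Probability.Probability"
begin

definition spherically_symmetric :: "'a measure \<Rightarrow> ('a \<Rightarrow> real^'d) \<Rightarrow> bool" where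
  "spherically_symmetric M X \<longleftrightarrow>
     (\<forall>\<Gamma>::real^'d^'d. orthogonal_matrix \<Gamma> \<longrightarrow>
        distr M borel (\<lambda>\<omega>. \<Gamma> *v X \<omega>) = distr M borel X)"

end

theory Submission
  imports Defs
begin

text \<open>Necessity: the reflection along \<open>v - (v \<bullet> u) u\<close> is orthogonal, so it preserves the law of
  \<open>X\<close>; it fixes \<open>u \<bullet> X\<close> but changes the sign of \<open>(v - (v \<bullet> u) u) \<bullet> X\<close>.

  Sufficiency: the hypothesis says that \<open>w \<bullet> X\<close> integrates to zero over every upper level set of
  \<open>u \<bullet> X\<close> whenever \<open>w \<perp> u\<close>, hence against every bounded function of \<open>u \<bullet> X\<close>. Differentiating
  \<open>E cos (r u\<^sub>\<theta> \<bullet> X + b)\<close> along a rotation \<open>u\<^sub>\<theta>\<close> of the unit vector gives exactly such an integral,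
  so these cosine integrals depend on the frequency only through its norm. They are invariant under
  every orthogonal map, and cosine integrals determine a probability measure on \<open>\<real>\<^sup>d\<close>
  (Stone-Weierstrass on large cubes).\<close>

section \<open>Trigonometric approximation on cubes\<close>

inductive_set trig_poly :: "(real^'d \<Rightarrow> real) set" where
  cos: "(\<lambda>x. cos (t \<bullet> x + b)) \<in> trig_poly"
| scale: "f \<in> trig_poly \<Longrightarrow> (\<lambda>x. c * f x) \<in> trig_poly"
| add: "f \<in> trig_poly \<Longrightarrow> g \<in> trig_poly \<Longrightarrow> (\<lambda>x. f x + g x) \<in> trig_poly"

lemma trig_poly_const: "(\<lambda>_. c) \<in> trig_poly"
  using trig_poly.scale[OF trig_poly.cos[of 0 0], of c] by simp

lemma trig_poly_mult_cos:
  assumes "g \<in> trig_poly"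
  shows "(\<lambda>x. cos (t \<bullet> x + b) * g x) \<in> trig_poly"
  using assms
proof induction
  case (cos s a)
  have "(\<lambda>x. (1/2) * cos ((t + s) \<bullet> x + (b + a)) + (1/2) * cos ((t - s) \<bullet> x + (b - a))) \<in> trig_poly"
    by (intro trig_poly.add trig_poly.scale trig_poly.cos)
  moreover have "(1/2) * cos ((t + s) \<bullet> x + (b + a)) + (1/2) * cos ((t - s) \<bullet> x + (b - a))
      = cos (t \<bullet> x + b) * cos (s \<bullet> x + a)" for x
  proof -
    have sum: "(t + s) \<bullet> x + (b + a) = (t \<bullet> x + b) + (s \<bullet> x + a)"
      and diff: "(t - s) \<bullet> x + (b - a) = (t \<bullet> x + b) - (s \<bullet> x + a)"
      by (simp_all add: inner_add_left inner_diff_left)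
    show ?thesis unfolding sum diff cos_times_cos by simp
  qed
  ultimately show ?case by simp
next
  case (scale f c)
  then show ?case using trig_poly.scale[OF scale.IH, of c] by (simp add: algebra_simps)
next
  case (add f g)
  then show ?case using trig_poly.add[OF add.IH] by (simp add: algebra_simps)
qed

lemma trig_poly_mult:
  assumes "f \<in> trig_poly" "g \<in> trig_poly"
  shows "(\<lambda>x. f x * g x) \<in> trig_poly"
  using assms(1)
proof induction
  case (cos t b)
  then show ?case using trig_poly_mult_cos[OF assms(2)] .
next
  case (scale f c)
  then show ?case using trig_poly.scale[OF scale.IH, of c] by (simp add: algebra_simps)
next
  case (add f h)
  then show ?case using trig_poly.add[OF add.IH] by (simp add: algebra_simps)
qed

lemma continuous_on_trig_poly: "f \<in> trig_poly \<Longrightarrow> continuous_on A f"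
proof (induction rule: trig_poly.induct)
  case (cos t b)
  show ?case by (intro continuous_intros)
qed (simp_all add: continuous_on_add continuous_on_mult_left)

lemma trig_poly_bounded: "f \<in> trig_poly \<Longrightarrow> \<exists>B. \<forall>x. \<bar>f x\<bar> \<le> B"
proof (induction rule: trig_poly.induct)
  case (cos t b)
  show ?case by (auto intro!: exI[of _ 1])
next
  case (scale f c)
  then obtain B where "\<forall>x. \<bar>f x\<bar> \<le> B" by blast
  then have "\<forall>x. \<bar>c * f x\<bar> \<le> \<bar>c\<bar> * B"
    by (simp add: abs_mult mult_left_mono)
  then show ?case by blast
next
  case (add f g)
  then obtain B C where "\<forall>x. \<bar>f x\<bar> \<le> B" "\<forall>x. \<bar>g x\<bar> \<le> C" by blast
  then have "\<forall>x. \<bar>f x + g x\<bar> \<le> B + C" by (metis abs_triangle_ineq add_mono order_trans)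
  then show ?case by blast
qed

lemma integrable_trig_poly:
  fixes \<mu> :: "(real^'d) measure"
  assumes "finite_measure \<mu>" "sets \<mu> = sets borel" "f \<in> trig_poly"
  shows "integrable \<mu> f"
proof -
  obtain B where "\<forall>x. \<bar>f x\<bar> \<le> B" using trig_poly_bounded[OF assms(3)] by blast
  moreover have "f \<in> borel_measurable \<mu>"
    using borel_measurable_continuous_onI[OF continuous_on_trig_poly[OF assms(3)]] assms(2)
    by (simp add: measurable_def)
  ultimately show ?thesis
    by (intro finite_measure.integrable_const_bound[OF assms(1), where B=B]) auto
qed

lemma integral_trig_poly_eq:
  fixes \<mu> \<nu> :: "(real^'d) measure"
  assumes fin: "finite_measure \<mu>" "finite_measure \<nu>"
    and sets: "sets \<mu> = sets borel" "sets \<nu> = sets borel"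
    and cos: "\<And>t b. (\<integral>x. cos (t \<bullet> x + b) \<partial>\<mu>) = (\<integral>x. cos (t \<bullet> x + b) \<partial>\<nu>)"
    and "f \<in> trig_poly"
  shows "(\<integral>x. f x \<partial>\<mu>) = (\<integral>x. f x \<partial>\<nu>)"
  using \<open>f \<in> trig_poly\<close>
proof induction
  case (add f g)
  have "integrable \<mu> f" "integrable \<mu> g" "integrable \<nu> f" "integrable \<nu> g"
    using integrable_trig_poly[OF fin(1) sets(1)] integrable_trig_poly[OF fin(2) sets(2)] add.hyps
    by blast+
  with add.IH show ?case by simp
qed (simp_all add: cos)

definition cube :: "real \<Rightarrow> (real^'d) set" where
  "cube L = {x. \<forall>j. \<bar>x $ j\<bar> \<le> L}"

lemma cube_eq_cbox: "cube L = cbox (- (\<chi> j. L)) (\<chi> j. L)"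
  unfolding cube_def by (auto simp: mem_box_cart abs_le_iff) (smt (verit))+

lemma compact_cube: "compact (cube L)"
  unfolding cube_eq_cbox by simp

lemma closed_cube: "closed (cube L)"
  using compact_cube compact_imp_closed by blast

lemma cube_mono: "L \<le> L' \<Longrightarrow> cube L \<subseteq> cube L'"
  unfolding cube_def by (auto intro: order_trans)

lemma UN_cube_of_nat: "(\<Union>n. cube (real n)) = UNIV"
proof -
  have "x \<in> cube (real (nat \<lceil>Max (range (\<lambda>j. \<bar>x $ j\<bar>))\<rceil>))" for x :: "real^'d"
  proof -
    have "\<bar>x $ j\<bar> \<le> Max (range (\<lambda>j. \<bar>x $ j\<bar>))" for j by (rule Max_ge) auto
    then show ?thesis
      unfolding cube_def using order_trans[OF _ real_nat_ceiling_ge] by blast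
  qed
  then show ?thesis by blast
qed

text \<open>The triangle wave \<open>fold_real L\<close> maps \<open>\<real>\<close> onto \<open>[-L, L]\<close> by reflections; the coordinate
  functions \<open>cos (pi (x\<^sub>j + L) / (2L))\<close> are invariant under it, and so is every polynomial
  in them. Hence a trigonometric approximation on the cube built from them stays bounded on the
  whole space.\<close>

definition fold_real :: "real \<Rightarrow> real \<Rightarrow> real" where
  "fold_real L s = (2 * L / pi) * arccos (cos (pi * (s + L) / (2 * L))) - L"

definition fold_cube :: "real \<Rightarrow> real^'d \<Rightarrow> real^'d" where
  "fold_cube L x = (\<chi> j. fold_real L (x $ j))"

lemma fold_real_bounded:
  assumes "L > 0"
  shows "\<bar>fold_real L s\<bar> \<le> L"
proof -
  let ?a = "arccos (cos (pi * (s + L) / (2 * L)))"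
  have "0 \<le> ?a" "?a \<le> pi" by (auto intro: arccos_lbound arccos_ubound)
  then have "0 \<le> (2 * L / pi) * ?a" "(2 * L / pi) * ?a \<le> (2 * L / pi) * pi"
    using assms by (simp, intro mult_left_mono, auto)
  moreover have "(2 * L / pi) * pi = 2 * L" by simp
  ultimately show ?thesis unfolding fold_real_def by (simp only: abs_le_iff) linarith
qed

lemma fold_cube_in_cube: "L > 0 \<Longrightarrow> fold_cube L x \<in> cube L"
  unfolding cube_def fold_cube_def using fold_real_bounded by auto

lemma cos_fold_real:
  assumes "L > 0"
  shows "cos (pi * (fold_real L s + L) / (2 * L)) = cos (pi * (s + L) / (2 * L))"
proof -
  have "pi * (fold_real L s + L) / (2 * L) = arccos (cos (pi * (s + L) / (2 * L)))"
    using assms unfolding fold_real_def by (simp add: field_simps)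
  then show ?thesis by (simp add: cos_arccos_abs)
qed

lemma cos_coordinate_inj:
  assumes "L > 0" "\<bar>s\<bar> \<le> L" "\<bar>s'\<bar> \<le> L"
    and "cos (pi * (s + L) / (2 * L)) = cos (pi * (s' + L) / (2 * L))"
  shows "s = s'"
proof -
  have angle: "0 \<le> pi * (y + L) / (2 * L) \<and> pi * (y + L) / (2 * L) \<le> pi" if "\<bar>y\<bar> \<le> L" for y
  proof -
    have y: "0 \<le> y + L" "y + L \<le> 2 * L" using that by auto
    then have "pi * (y + L) \<le> pi * (2 * L)" by (intro mult_left_mono) auto
    then have "pi * (y + L) / (2 * L) \<le> pi * (2 * L) / (2 * L)"
      using \<open>L > 0\<close> by (intro divide_right_mono) auto
    then show ?thesis using \<open>L > 0\<close> y by auto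
  qed
  have "pi * (s + L) / (2 * L) = pi * (s' + L) / (2 * L)"
    using angle[OF assms(2)] angle[OF assms(3)] assms(4) by (meson cos_inj_pi)
  then show ?thesis using \<open>L > 0\<close> by (simp add: field_simps)
qed

lemma trig_poly_approx_on_cube:
  fixes f :: "real^'d \<Rightarrow> real"
  assumes L: "L > 0" and f: "continuous_on UNIV f" and e: "e > 0"
  obtains p where "p \<in> trig_poly" "\<And>x. x \<in> cube L \<Longrightarrow> \<bar>f x - p x\<bar> < e"
    "\<And>x. p (fold_cube L x) = p x"
proof -
  define R where "R = {p :: real^'d \<Rightarrow> real. p \<in> trig_poly \<and> (\<forall>x. p (fold_cube L x) = p x)}"
  define coord where "coord j x = cos (pi * (x $ j + L) / (2 * L))" for j and x :: "real^'d"
  have coord_R: "coord j \<in> R" for j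
  proof -
    have "(\<lambda>x. cos (((pi / (2 * L)) *\<^sub>R axis j 1) \<bullet> x + pi / 2)) = coord j"
      using L by (auto simp: coord_def inner_axis' field_simps)
    then have "coord j \<in> trig_poly" using trig_poly.cos by metis
    then show ?thesis using cos_fold_real[OF L] by (simp add: R_def coord_def fold_cube_def)
  qed
  interpret function_ring_on R "cube L"
  proof unfold_locales
    show "compact (cube L)" by (rule compact_cube)
    show "continuous_on (cube L) p" if "p \<in> R" for p
      using that continuous_on_trig_poly unfolding R_def by blast
    show "(\<lambda>x. p x + q x) \<in> R" "(\<lambda>x. p x * q x) \<in> R" if "p \<in> R" "q \<in> R" for p q
      using that by (simp_all add: R_def trig_poly.add trig_poly_mult)
    show "(\<lambda>_. c) \<in> R" for c
      using trig_poly_const unfolding R_def by auto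
    show "\<exists>p\<in>R. p x \<noteq> p y" if "x \<in> cube L" "y \<in> cube L" "x \<noteq> y" for x y
    proof -
      obtain j where "x $ j \<noteq> y $ j" using \<open>x \<noteq> y\<close> by (auto simp: vec_eq_iff)
      moreover have "\<bar>x $ j\<bar> \<le> L" "\<bar>y $ j\<bar> \<le> L" using that by (auto simp: cube_def)
      ultimately have "coord j x \<noteq> coord j y"
        using cos_coordinate_inj[OF L] unfolding coord_def by metis
      then show ?thesis using coord_R by blast
    qed
  qed
  have "\<exists>p\<in>R. \<forall>x\<in>cube L. \<bar>f x - p x\<bar> < e"
    using Stone_Weierstrass_basic[OF continuous_on_subset[OF f subset_UNIV] e] .
  then show ?thesis using that unfolding R_def by blast
qed

section \<open>Cosine integrals determine a probability measure\<close>

lemma measure_cube_tendsto_1: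
  fixes \<mu> :: "(real^'d) measure"
  assumes "prob_space \<mu>" "sets \<mu> = sets borel"
  shows "(\<lambda>n. measure \<mu> (cube (real n))) \<longlonglongrightarrow> 1"
proof -
  interpret prob_space \<mu> by fact
  have "range (\<lambda>n. cube (real n)) \<subseteq> sets \<mu>"
    using assms(2) closed_cube by (auto intro: borel_closed)
  moreover have "incseq (\<lambda>n. cube (real n) :: (real^'d) set)"
    by (auto simp: incseq_def intro!: cube_mono)
  ultimately have "(\<lambda>n. measure \<mu> (cube (real n))) \<longlonglongrightarrow> measure \<mu> (\<Union>n. cube (real n))"
    by (rule finite_Lim_measure_incseq)
  moreover have "measure \<mu> (\<Union>n. cube (real n)) = 1"
    using sets_eq_imp_space_eq[OF assms(2)] prob_space by (simp add: UN_cube_of_nat)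
  ultimately show ?thesis by simp
qed

lemma (in prob_space) abs_integral_diff_le:
  fixes f g :: "'a \<Rightarrow> real"
  assumes "integrable M f" "integrable M g" "K \<in> events"
    and inside: "\<And>x. x \<in> K \<Longrightarrow> \<bar>f x - g x\<bar> \<le> e"
    and outside: "\<And>x. x \<in> space M \<Longrightarrow> \<bar>f x - g x\<bar> \<le> e + C"
  shows "\<bar>(\<integral>x. f x \<partial>M) - (\<integral>x. g x \<partial>M)\<bar> \<le> e + C * prob (space M - K)"
proof -
  have ind: "integrable M (indicator (space M - K) :: 'a \<Rightarrow> real)"
    using \<open>K \<in> events\<close> by (intro integrable_real_indicator) (auto simp: emeasure_eq_measure)
  have "\<bar>(\<integral>x. f x \<partial>M) - (\<integral>x. g x \<partial>M)\<bar> = \<bar>\<integral>x. f x - g x \<partial>M\<bar>"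
    using assms(1,2) by simp
  also have "\<dots> \<le> (\<integral>x. \<bar>f x - g x\<bar> \<partial>M)" by (rule integral_abs_bound)
  also have "\<dots> \<le> (\<integral>x. e + C * indicator (space M - K) x \<partial>M)"
    using assms(1,2) ind inside outside by (intro integral_mono) (auto split: split_indicator)
  also have "\<dots> = e + C * prob (space M - K)"
    using ind \<open>K \<in> events\<close> by (simp add: prob_space)
  finally show ?thesis .
qed

lemma integral_trig_poly_approx:
  fixes \<mu> :: "(real^'d) measure" and f p :: "real^'d \<Rightarrow> real"
  assumes "prob_space \<mu>" "sets \<mu> = sets borel" "e > 0"
    and f: "continuous_on UNIV f" "\<And>x. \<bar>f x\<bar> \<le> B"
    and p: "p \<in> trig_poly" "\<And>x. \<bar>p x\<bar> \<le> B + e"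
    and close: "\<And>x. x \<in> cube L \<Longrightarrow> \<bar>f x - p x\<bar> < e"
    and large: "measure \<mu> (cube L) \<ge> 1 - e"
  shows "\<bar>(\<integral>x. f x \<partial>\<mu>) - (\<integral>x. p x \<partial>\<mu>)\<bar> \<le> e * (2 * B + 1)"
proof -
  interpret prob_space \<mu> by fact
  have space: "space \<mu> = UNIV" using sets_eq_imp_space_eq[OF assms(2)] by simp
  have cube: "cube L \<in> events" using assms(2) closed_cube by (auto intro: borel_closed)
  have "f \<in> borel_measurable \<mu>"
    using borel_measurable_continuous_onI[OF f(1)] assms(2) by (simp add: measurable_def)
  then have "integrable \<mu> f" using f(2) by (intro integrable_const_bound[where B=B]) auto
  moreover have "integrable \<mu> p"
    using integrable_trig_poly[OF finite_measure assms(2) p(1)] .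
  moreover have "\<bar>f x - p x\<bar> \<le> e + 2 * B" for x
    using f(2)[of x] p(2)[of x] by (simp add: abs_le_iff)
  ultimately have "\<bar>(\<integral>x. f x \<partial>\<mu>) - (\<integral>x. p x \<partial>\<mu>)\<bar> \<le> e + 2 * B * prob (space \<mu> - cube L)"
    using close cube by (intro abs_integral_diff_le) (auto intro: less_imp_le)
  also have "\<dots> \<le> e + 2 * B * e"
  proof -
    have "prob (space \<mu> - cube L) \<le> e"
      using prob_compl[OF cube] large by simp
    then show ?thesis using f(2)[of 0] by (intro add_left_mono mult_left_mono) auto
  qed
  finally show ?thesis by (simp add: algebra_simps)
qed

lemma integral_bounded_continuous_eq_if_cos_integrals_eq:
  fixes \<mu> \<nu> :: "(real^'d) measure" and f :: "real^'d \<Rightarrow> real"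
  assumes prob: "prob_space \<mu>" "prob_space \<nu>" and sets: "sets \<mu> = sets borel" "sets \<nu> = sets borel"
    and cos: "\<And>t b. (\<integral>x. cos (t \<bullet> x + b) \<partial>\<mu>) = (\<integral>x. cos (t \<bullet> x + b) \<partial>\<nu>)"
    and f: "continuous_on UNIV f" "\<And>x. \<bar>f x\<bar> \<le> B"
  shows "(\<integral>x. f x \<partial>\<mu>) = (\<integral>x. f x \<partial>\<nu>)"
proof -
  have B: "0 \<le> B" using f(2)[of 0] by linarith
  have close: "\<bar>(\<integral>x. f x \<partial>\<mu>) - (\<integral>x. f x \<partial>\<nu>)\<bar> \<le> e * (4 * B + 2)" if e: "e > 0" for e
  proof -
    have "eventually (\<lambda>n. measure \<mu> (cube (real n)) > 1 - e \<and> measure \<nu> (cube (real n)) > 1 - e)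
        sequentially"
      using e measure_cube_tendsto_1[OF prob(1) sets(1)] measure_cube_tendsto_1[OF prob(2) sets(2)]
      by (intro eventually_conj order_tendstoD) auto
    then obtain n where n: "n > 0" "measure \<mu> (cube (real n)) \<ge> 1 - e" "measure \<nu> (cube (real n)) \<ge> 1 - e"
      by (metis (no_types, lifting) eventually_sequentially less_imp_le less_add_one add_gr_0 zero_less_one)
    then have L: "real n > 0" by simp
    obtain p where p: "p \<in> trig_poly" "\<And>x. x \<in> cube (real n) \<Longrightarrow> \<bar>f x - p x\<bar> < e"
      "\<And>x. p (fold_cube (real n) x) = p x"
      using trig_poly_approx_on_cube[OF L f(1) e] by blast
    have p_bounded: "\<bar>p x\<bar> \<le> B + e" for x
      using p(2)[OF fold_cube_in_cube[OF L, of x]] f(2)[of "fold_cube (real n) x"] p(3)[of x]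
      by (simp only: abs_le_iff abs_less_iff) linarith
    have "(\<integral>x. p x \<partial>\<mu>) = (\<integral>x. p x \<partial>\<nu>)"
      using integral_trig_poly_eq[OF prob_space.finite_measure[OF prob(1)]
          prob_space.finite_measure[OF prob(2)] sets cos p(1)] .
    moreover have "\<bar>(\<integral>x. f x \<partial>\<mu>) - (\<integral>x. p x \<partial>\<mu>)\<bar> \<le> e * (2 * B + 1)"
      using integral_trig_poly_approx[OF prob(1) sets(1) e f p(1) p_bounded p(2) n(2)] .
    moreover have "\<bar>(\<integral>x. f x \<partial>\<nu>) - (\<integral>x. p x \<partial>\<nu>)\<bar> \<le> e * (2 * B + 1)"
      using integral_trig_poly_approx[OF prob(2) sets(2) e f p(1) p_bounded p(2) n(3)] .
    ultimately show ?thesis by (simp add: abs_le_iff algebra_simps)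
  qed
  have "\<bar>(\<integral>x. f x \<partial>\<mu>) - (\<integral>x. f x \<partial>\<nu>)\<bar> \<le> 0"
  proof (rule field_le_epsilon)
    fix d :: real assume "d > 0"
    then have "d / (4 * B + 2) > 0" using B by simp
    from close[OF this] show "\<bar>(\<integral>x. f x \<partial>\<mu>) - (\<integral>x. f x \<partial>\<nu>)\<bar> \<le> 0 + d"
      using B by simp
  qed
  then show ?thesis by simp
qed

lemma min_infdist_tendsto_indicator:
  fixes C :: "'a::metric_space set"
  assumes "closed C" "C \<noteq> {}"
  shows "(\<lambda>n. min 1 (real n * infdist x C)) \<longlonglongrightarrow> (indicator (- C) x :: real)"
proof (cases "x \<in> C")
  case True
  then show ?thesis by simp
next
  case False
  then have d: "infdist x C > 0" using assms infdist_pos_not_in_closed by blast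
  obtain N :: nat where "1 / infdist x C < real N" using reals_Archimedean2 by blast
  then have "eventually (\<lambda>n. real n > 1 / infdist x C) sequentially"
    unfolding eventually_sequentially by (meson less_le_trans of_nat_le_iff)
  then have "eventually (\<lambda>n. min 1 (real n * infdist x C) = 1) sequentially"
    by eventually_elim (use d in \<open>simp add: field_simps\<close>)
  then show ?thesis using False by (simp add: tendsto_eventually)
qed

lemma continuous_on_min_infdist: "continuous_on A (\<lambda>x. min 1 (c * infdist x C))"
  by (intro continuous_intros continuous_on_infdist continuous_on_id)

lemma integral_min_infdist_tendsto:
  fixes M :: "'a::metric_space measure"
  assumes "prob_space M" "sets M = sets borel" "closed C" "C \<noteq> {}"
  shows "(\<lambda>n. \<integral>x. min 1 (real n * infdist x C) \<partial>M) \<longlonglongrightarrow> measure M (- C)"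
proof -
  interpret prob_space M by fact
  have space: "space M = UNIV" using sets_eq_imp_space_eq[OF assms(2)] by simp
  have "(\<lambda>n. \<integral>x. min 1 (real n * infdist x C) \<partial>M) \<longlonglongrightarrow> (\<integral>x. indicator (- C) x \<partial>M)"
  proof (rule integral_dominated_convergence[where w="\<lambda>_. 1"])
    show "indicat_real (- C) \<in> borel_measurable M"
      using assms(2,3) by (simp add: borel_open measurable_def)
    show "(\<lambda>x. min 1 (real n * infdist x C)) \<in> borel_measurable M" for n
      using borel_measurable_continuous_onI[OF continuous_on_min_infdist[of UNIV "real n" C]] assms(2)
      by (simp add: measurable_def)
    have "0 \<le> real n * infdist x C" for n x by (simp add: infdist_nonneg)
    then show "AE x in M. norm (min 1 (real n * infdist x C)) \<le> 1" for n by simp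
  qed (use min_infdist_tendsto_indicator[OF assms(3,4)] in auto)
  then show ?thesis using space by simp
qed

lemma measure_eq_if_bounded_continuous_integrals_eq:
  fixes \<mu> \<nu> :: "'a::metric_space measure"
  assumes prob: "prob_space \<mu>" "prob_space \<nu>" and sets: "sets \<mu> = sets borel" "sets \<nu> = sets borel"
    and integral_eq: "\<And>(f :: 'a \<Rightarrow> real) B. continuous_on UNIV f \<Longrightarrow> (\<And>x. \<bar>f x\<bar> \<le> B) \<Longrightarrow>
      (\<integral>x. f x \<partial>\<mu>) = (\<integral>x. f x \<partial>\<nu>)"
  shows "\<mu> = \<nu>"
proof (rule measure_eqI_generator_eq[where E="Collect open" and \<Omega>=UNIV and A="\<lambda>_. UNIV"])
  have space: "space \<mu> = UNIV" "space \<nu> = UNIV"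
    using sets_eq_imp_space_eq[OF sets(1)] sets_eq_imp_space_eq[OF sets(2)] by simp_all
  show "emeasure \<mu> U = emeasure \<nu> U" if "U \<in> Collect open" for U
  proof (cases "U = UNIV")
    case True
    then show ?thesis
      using prob_space.emeasure_space_1[OF prob(1)] prob_space.emeasure_space_1[OF prob(2)] space
      by simp
  next
    case False
    define C where "C = - U"
    have C: "closed C" "C \<noteq> {}" "U = - C" using that False by (auto simp: C_def)
    have "\<bar>min 1 (real n * infdist x C)\<bar> \<le> 1" for n x
      using infdist_nonneg[of x C] by simp
    then have "(\<lambda>n. \<integral>x. min 1 (real n * infdist x C) \<partial>\<mu>) = (\<lambda>n. \<integral>x. min 1 (real n * infdist x C) \<partial>\<nu>)"
      by (intro ext integral_eq continuous_on_min_infdist)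
    then have "measure \<mu> (- C) = measure \<nu> (- C)"
      using integral_min_infdist_tendsto[OF prob(1) sets(1) C(1,2)]
        integral_min_infdist_tendsto[OF prob(2) sets(2) C(1,2)]
      by (simp add: LIMSEQ_unique)
    then show ?thesis
      using finite_measure.emeasure_eq_measure[OF prob_space.finite_measure[OF prob(1)]]
        finite_measure.emeasure_eq_measure[OF prob_space.finite_measure[OF prob(2)]] C(3)
      by simp
  qed
  show "Int_stable (Collect open :: 'a set set)" by (auto simp: Int_stable_def)
  show "sets \<mu> = sigma_sets UNIV (Collect open)" "sets \<nu> = sigma_sets UNIV (Collect open)"
    using sets by (simp_all add: borel_def)
  show "emeasure \<mu> UNIV \<noteq> \<infinity>"
    using prob_space.emeasure_space_1[OF prob(1)] space by simp
qed auto

lemma measure_eq_if_cos_integrals_eq: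
  fixes \<mu> \<nu> :: "(real^'d) measure"
  assumes "prob_space \<mu>" "prob_space \<nu>" "sets \<mu> = sets borel" "sets \<nu> = sets borel"
    and "\<And>t b. (\<integral>x. cos (t \<bullet> x + b) \<partial>\<mu>) = (\<integral>x. cos (t \<bullet> x + b) \<partial>\<nu>)"
  shows "\<mu> = \<nu>"
proof (rule measure_eq_if_bounded_continuous_integrals_eq[OF assms(1-4)])
  show "(\<integral>x. f x \<partial>\<mu>) = (\<integral>x. f x \<partial>\<nu>)"
    if "continuous_on UNIV f" "\<And>x. \<bar>f x\<bar> \<le> B" for f :: "real^'d \<Rightarrow> real" and B
    using integral_bounded_continuous_eq_if_cos_integrals_eq[OF assms that] .
qed

section \<open>Integrals against functions of a real random variable\<close>

lemma measure_eqI_atLeast: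
  fixes M N :: "real measure"
  assumes sets: "sets M = sets borel" "sets N = sets borel" and "finite_measure M"
    and eq: "\<And>c. emeasure M {c..} = emeasure N {c..}"
  shows "M = N"
proof (rule measure_eqI_generator_eq[where E="range atLeast" and \<Omega>=UNIV and A="\<lambda>i. {- real i..}"])
  show "Int_stable (range atLeast :: real set set)"
    unfolding Int_stable_def
  proof safe
    fix a b :: real
    show "{a..} \<inter> {b..} \<in> range atLeast" by (rule image_eqI[of _ _ "max a b"]) auto
  qed
  show "sets M = sigma_sets UNIV (range atLeast)" "sets N = sigma_sets UNIV (range atLeast)"
    using sets by (simp_all add: borel_Ici)
  show "(\<Union>i. {- real i..}) = (UNIV :: real set)"
  proof -
    have "x \<in> {- real (nat \<lceil>- x\<rceil>)..}" for x :: real by simp linarith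
    then show ?thesis by blast
  qed
  show "emeasure M {- real i..} \<noteq> \<infinity>" for i
    using finite_measure.emeasure_finite[OF \<open>finite_measure M\<close>] by simp
qed (use eq in auto)

lemma integrable_mult_bounded:
  fixes f g :: "'a \<Rightarrow> real"
  assumes "integrable M f" "g \<in> borel_measurable M" "\<And>x. \<bar>g x\<bar> \<le> K"
  shows "integrable M (\<lambda>x. f x * g x)"
proof (rule Bochner_Integration.integrable_bound[where f="\<lambda>x. \<bar>K\<bar> * f x"])
  show "integrable M (\<lambda>x. \<bar>K\<bar> * f x)" using assms(1) by simp
  show "(\<lambda>x. f x * g x) \<in> borel_measurable M" using assms(1,2) by measurable
  have "\<bar>f x\<bar> * \<bar>g x\<bar> \<le> \<bar>f x\<bar> * \<bar>K\<bar>" for x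
    using assms(3)[of x] by (intro mult_left_mono) auto
  then show "AE x in M. norm (f x * g x) \<le> norm (\<bar>K\<bar> * f x)"
    by (simp add: abs_mult mult.commute)
qed

lemma
  fixes W S :: "'a \<Rightarrow> real"
  assumes W: "W \<in> borel_measurable M" "\<And>x. 0 \<le> W x" and S: "S \<in> borel_measurable M"
  shows integral_distr_density:
      "g \<in> borel_measurable borel \<Longrightarrow>
        (\<integral>s. g s \<partial>distr (density M W) borel S) = (\<integral>x. W x * g (S x) \<partial>M)"
    and emeasure_distr_density:
      "integrable M W \<Longrightarrow> A \<in> sets borel \<Longrightarrow>
        emeasure (distr (density M W) borel S) A = (\<integral>x. W x * indicator A (S x) \<partial>M)"
proof -
  have S': "S \<in> measurable (density M W) borel" using S by simp
  show "(\<integral>s. g s \<partial>distr (density M W) borel S) = (\<integral>x. W x * g (S x) \<partial>M)"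
    if g: "g \<in> borel_measurable borel"
  proof -
    have "(\<integral>s. g s \<partial>distr (density M W) borel S) = (\<integral>x. g (S x) \<partial>density M W)"
      by (rule integral_distr[OF S' g])
    also have "\<dots> = (\<integral>x. W x *\<^sub>R g (S x) \<partial>M)"
      using W S g by (intro integral_density) auto
    finally show ?thesis by simp
  qed
  show "emeasure (distr (density M W) borel S) A = (\<integral>x. W x * indicator A (S x) \<partial>M)"
    if "integrable M W" "A \<in> sets borel"
  proof -
    have "emeasure (distr (density M W) borel S) A = emeasure (density M W) (S -` A \<inter> space M)"
      using emeasure_distr[OF S' that(2)] by simp
    also have "\<dots> = (\<integral>\<^sup>+x. ennreal (W x) * indicator (S -` A \<inter> space M) x \<partial>M)"
      using S W that(2) by (intro emeasure_density) (auto intro: measurable_sets)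
    also have "\<dots> = (\<integral>\<^sup>+x. ennreal (W x * indicator A (S x)) \<partial>M)"
      by (intro nn_integral_cong) (auto simp: indicator_def)
    also have "\<dots> = (\<integral>x. W x * indicator A (S x) \<partial>M)"
      using W S that
      by (intro nn_integral_eq_integral integrable_mult_bounded[where K=1]) auto
    finally show ?thesis .
  qed
qed

text \<open>The positive and negative parts of \<open>Z\<close>, pushed forward under \<open>S\<close>, agree on all rays
  \<open>[c, \<infinity>)\<close> and hence coincide.\<close>

lemma integral_mult_eq_zero_if_tail_integrals_eq_zero:
  fixes Z S :: "'a \<Rightarrow> real" and g :: "real \<Rightarrow> real"
  assumes Z: "integrable M Z" and S: "S \<in> borel_measurable M"
    and tail: "\<And>c. (\<integral>x. Z x * indicator {x. S x \<ge> c} x \<partial>M) = 0"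
    and g: "g \<in> borel_measurable borel" "\<And>s. \<bar>g s\<bar> \<le> K"
  shows "(\<integral>x. Z x * g (S x) \<partial>M) = 0"
proof -
  define Zp Zn where "Zp x = max 0 (Z x)" and "Zn x = max 0 (- Z x)" for x
  have Zp: "Zp \<in> borel_measurable M" "integrable M Zp" "\<And>x. 0 \<le> Zp x"
    and Zn: "Zn \<in> borel_measurable M" "integrable M Zn" "\<And>x. 0 \<le> Zn x"
    using Z unfolding Zp_def Zn_def by auto
  have Z_eq: "Z x = Zp x - Zn x" for x unfolding Zp_def Zn_def by auto
  have int_mult: "integrable M (\<lambda>x. W x * h (S x))"
    if "integrable M W" "h \<in> borel_measurable borel" "\<And>s. \<bar>h s\<bar> \<le> H" for W :: "'a \<Rightarrow> real" and h H
    using that S by (intro integrable_mult_bounded[where K=H]) auto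
  have "distr (density M Zp) borel S = distr (density M Zn) borel S"
  proof (rule measure_eqI_atLeast)
    show "finite_measure (distr (density M Zp) borel S)"
      using emeasure_distr_density[OF Zp(1,3) S Zp(2), of UNIV]
      by (intro finite_measureI) (simp add: space_distr)
    show "emeasure (distr (density M Zp) borel S) {c..} = emeasure (distr (density M Zn) borel S) {c..}"
      for c
    proof -
      have "(\<integral>x. Zp x * indicator {c..} (S x) \<partial>M) - (\<integral>x. Zn x * indicator {c..} (S x) \<partial>M)
          = (\<integral>x. Z x * indicator {x. S x \<ge> c} x \<partial>M)"
        using int_mult[OF Zp(2), of "indicator {c..}" 1] int_mult[OF Zn(2), of "indicator {c..}" 1]
        by (subst Bochner_Integration.integral_diff[symmetric])
          (auto simp: Z_eq indicator_def algebra_simps)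
      then show ?thesis
        using tail[of c] by (simp add: emeasure_distr_density[OF Zp(1,3) S Zp(2)]
            emeasure_distr_density[OF Zn(1,3) S Zn(2)])
    qed
  qed simp_all
  then have "(\<integral>x. Zp x * g (S x) \<partial>M) = (\<integral>x. Zn x * g (S x) \<partial>M)"
    using integral_distr_density[OF Zp(1,3) S g(1)] integral_distr_density[OF Zn(1,3) S g(1)] by simp
  then show ?thesis
    using int_mult[OF Zp(2) g] int_mult[OF Zn(2) g] by (simp add: Z_eq left_diff_distrib)
qed

lemma has_real_derivative_integral:
  fixes f f' :: "real \<Rightarrow> 'a \<Rightarrow> real" and \<theta> :: real
  assumes f: "\<And>t. integrable M (f t)" and f': "\<And>t. f' t \<in> borel_measurable M"
    and deriv: "\<And>t x. ((\<lambda>t. f t x) has_real_derivative f' t x) (at t)"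
    and dominated: "\<And>t x. \<bar>f' t x\<bar> \<le> G x" and G: "integrable M G"
  shows "((\<lambda>t. \<integral>x. f t x \<partial>M) has_real_derivative (\<integral>x. f' \<theta> x \<partial>M)) (at \<theta>)"
  unfolding DERIV_def tendsto_at_iff_sequentially comp_def
proof (intro allI impI)
  fix h :: "nat \<Rightarrow> real" assume h: "\<forall>i. h i \<in> UNIV - {0}" "h \<longlonglongrightarrow> 0"
  define q where "q i x = (f (\<theta> + h i) x - f \<theta> x) / h i" for i x
  have "(\<lambda>i. \<integral>x. q i x \<partial>M) \<longlonglongrightarrow> (\<integral>x. f' \<theta> x \<partial>M)"
  proof (rule integral_dominated_convergence[where w=G])
    show "q i \<in> borel_measurable M" for i
      unfolding q_def using f by measurable
    show "AE x in M. (\<lambda>i. q i x) \<longlonglongrightarrow> f' \<theta> x"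
    proof (rule AE_I2)
      fix x
      have "(\<lambda>d. (f (\<theta> + d) x - f \<theta> x) / d) \<midarrow>0\<rightarrow> f' \<theta> x"
        using deriv[of x \<theta>] by (simp add: DERIV_def)
      then show "(\<lambda>i. q i x) \<longlonglongrightarrow> f' \<theta> x"
        unfolding tendsto_at_iff_sequentially comp_def q_def using h by blast
    qed
    show "AE x in M. norm (q i x) \<le> G x" for i
    proof (rule AE_I2)
      fix x
      have "norm (f (\<theta> + h i) x - f \<theta> x) \<le> G x * norm ((\<theta> + h i) - \<theta>)"
        by (rule field_differentiable_bound[OF convex_UNIV, where f'="\<lambda>t. f' t x"])
          (simp_all add: deriv dominated)
      then show "norm (q i x) \<le> G x"
        using h(1) unfolding q_def by (simp add: abs_divide divide_le_eq)
    qed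
  qed (use f' G in auto)
  moreover have "(\<integral>x. q i x \<partial>M) = ((\<integral>x. f (\<theta> + h i) x \<partial>M) - (\<integral>x. f \<theta> x \<partial>M)) / h i" for i
    unfolding q_def using f by simp
  ultimately show "(\<lambda>i. ((\<integral>x. f (\<theta> + h i) x \<partial>M) - (\<integral>x. f \<theta> x \<partial>M)) / h i)
      \<longlonglongrightarrow> (\<integral>x. f' \<theta> x \<partial>M)"
    by simp
qed

section \<open>Spherical symmetry\<close>

lemma exists_unit_orthogonal_plane:
  fixes e1 s :: "'a::euclidean_space"
  assumes "DIM('a) \<ge> 2" "norm e1 = 1"
  obtains e2 where "norm e2 = 1" "e1 \<bullet> e2 = 0" "s = (s \<bullet> e1) *\<^sub>R e1 + (s \<bullet> e2) *\<^sub>R e2"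
proof (cases "s = (s \<bullet> e1) *\<^sub>R e1")
  case True
  obtain y where y: "y \<noteq> 0" "orthogonal e1 y"
    using orthogonal_to_vector_exists[OF assms(1)] by blast
  define e2 where "e2 = y /\<^sub>R norm y"
  have "norm e2 = 1" using y(1) by (simp add: e2_def)
  moreover have "e1 \<bullet> e2 = 0" using y(2) by (simp add: e2_def orthogonal_def)
  moreover have "s = (s \<bullet> e1) *\<^sub>R e1 + (s \<bullet> e2) *\<^sub>R e2"
  proof -
    have "s \<bullet> e2 = 0" by (subst True) (simp add: \<open>e1 \<bullet> e2 = 0\<close>)
    then show ?thesis by (simp only: scaleR_zero_left add_0_right) (rule True)
  qed
  ultimately show ?thesis by (rule that)
next
  case False
  define p where "p = s - (s \<bullet> e1) *\<^sub>R e1"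
  have "p \<noteq> 0" using False by (simp add: p_def)
  have e1e1: "e1 \<bullet> e1 = 1" using assms(2) by (simp add: dot_square_norm)
  then have e1p: "e1 \<bullet> p = 0" by (simp add: p_def inner_diff_right inner_commute)
  then have sp: "s \<bullet> p = p \<bullet> p"
    by (simp add: p_def inner_diff_left inner_commute)
  define e2 where "e2 = p /\<^sub>R norm p"
  have "norm e2 = 1" using \<open>p \<noteq> 0\<close> by (simp add: e2_def)
  moreover have "e1 \<bullet> e2 = 0" using e1p by (simp add: e2_def)
  moreover have "s = (s \<bullet> e1) *\<^sub>R e1 + (s \<bullet> e2) *\<^sub>R e2"
  proof -
    have "(s \<bullet> e2) *\<^sub>R e2 = p"
      using sp \<open>p \<noteq> 0\<close> by (auto simp: e2_def dot_square_norm power2_eq_square field_simps)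
    then show ?thesis by (simp add: p_def)
  qed
  ultimately show ?thesis by (rule that)
qed

lemma exists_rotation_angle:
  fixes s t :: "'a::euclidean_space"
  assumes "DIM('a) \<ge> 2" "norm s = norm t" "t \<noteq> 0"
  obtains e1 e2 \<theta> where "norm e1 = 1" "norm e2 = 1" "e1 \<bullet> e2 = 0"
    "t = norm t *\<^sub>R e1" "s = norm t *\<^sub>R (cos \<theta> *\<^sub>R e1 + sin \<theta> *\<^sub>R e2)"
proof -
  define r where "r = norm t"
  have r: "r > 0" using assms(3) by (simp add: r_def)
  define e1 where "e1 = t /\<^sub>R r"
  have e1: "norm e1 = 1" "t = r *\<^sub>R e1" using r by (simp_all add: e1_def r_def)
  obtain e2 where e2: "norm e2 = 1" "e1 \<bullet> e2 = 0" and s: "s = (s \<bullet> e1) *\<^sub>R e1 + (s \<bullet> e2) *\<^sub>R e2"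
    using exists_unit_orthogonal_plane[OF assms(1) e1(1)] by blast
  define a c where "a = s \<bullet> e1" and "c = s \<bullet> e2"
  have s_eq: "s = a *\<^sub>R e1 + c *\<^sub>R e2" unfolding a_def c_def by (rule s)
  have "r\<^sup>2 = s \<bullet> s" using assms(2) by (simp add: r_def dot_square_norm)
  also have "\<dots> = a\<^sup>2 + c\<^sup>2"
  proof -
    have "e1 \<bullet> e1 = 1" "e2 \<bullet> e2 = 1" using e1(1) e2(1) by (simp_all add: dot_square_norm)
    then show ?thesis
      unfolding s_eq using e2(2)
      by (simp add: inner_add_left inner_add_right inner_commute power2_eq_square)
  qed
  finally have r_sq: "r\<^sup>2 = a\<^sup>2 + c\<^sup>2" .
  have "(a / r)\<^sup>2 + (c / r)\<^sup>2 = (a\<^sup>2 + c\<^sup>2) / r\<^sup>2" by (simp add: power_divide add_divide_distrib)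
  also have "\<dots> = 1" unfolding r_sq[symmetric] using r by simp
  finally have "(a / r)\<^sup>2 + (c / r)\<^sup>2 = 1" .
  then obtain \<theta> where "a / r = cos \<theta>" "c / r = sin \<theta>" by (rule sincos_total_2pi)
  then have "a = r * cos \<theta>" "c = r * sin \<theta>" using r by (simp_all add: divide_eq_eq)
  then have "s = r *\<^sub>R (cos \<theta> *\<^sub>R e1 + sin \<theta> *\<^sub>R e2)"
    using s_eq by (simp add: scaleR_add_right)
  with e1(2) show ?thesis by (intro that[OF e1(1) e2]) (simp_all only: r_def)
qed

locale vanishing_tail_moments = prob_space M for M :: "'a measure" +
  fixes X :: "'a \<Rightarrow> real^'d"
  assumes measurable_X [measurable]: "X \<in> borel_measurable M"
    and integrable_norm_X: "integrable M (\<lambda>\<omega>. norm (X \<omega>))"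
    and tail_moments: "\<And>c u v. norm u = 1 \<Longrightarrow> norm v = 1 \<Longrightarrow>
      (\<integral>\<omega>. ((v - (v \<bullet> u) *\<^sub>R u) \<bullet> X \<omega>) * indicator {\<omega>. u \<bullet> X \<omega> \<ge> c} \<omega> \<partial>M) = 0"
begin

lemma integrable_inner_X: "integrable M (\<lambda>\<omega>. w \<bullet> X \<omega>)"
proof (rule Bochner_Integration.integrable_bound[where f="\<lambda>\<omega>. norm w * norm (X \<omega>)"])
  show "integrable M (\<lambda>\<omega>. norm w * norm (X \<omega>))" using integrable_norm_X by simp
  show "AE \<omega> in M. norm (w \<bullet> X \<omega>) \<le> norm (norm w * norm (X \<omega>))"
    by (simp add: Cauchy_Schwarz_ineq2)
qed measurable

lemma tail_moment_orthogonal: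
  assumes "norm u = 1" "w \<bullet> u = 0"
  shows "(\<integral>\<omega>. (w \<bullet> X \<omega>) * indicator {\<omega>. u \<bullet> X \<omega> \<ge> c} \<omega> \<partial>M) = 0"
proof (cases "w = 0")
  case False
  define v where "v = w /\<^sub>R norm w"
  have "norm v = 1" "v \<bullet> u = 0" using False assms(2) by (simp_all add: v_def)
  then have "(\<integral>\<omega>. (v \<bullet> X \<omega>) * indicator {\<omega>. u \<bullet> X \<omega> \<ge> c} \<omega> \<partial>M) = 0"
    using tail_moments[OF assms(1), where v=v and c=c] by simp
  moreover have "w \<bullet> x = norm w * (v \<bullet> x)" for x using False by (simp add: v_def)
  ultimately show ?thesis by (simp add: mult.assoc)
qed simp

lemma integral_orthogonal_sin_eq_0:
  assumes "norm u = 1" "w \<bullet> u = 0"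
  shows "(\<integral>\<omega>. (w \<bullet> X \<omega>) * sin (r * (u \<bullet> X \<omega>) + b) \<partial>M) = 0"
proof (rule integral_mult_eq_zero_if_tail_integrals_eq_zero[where K=1 and S="\<lambda>\<omega>. u \<bullet> X \<omega>"
      and g="\<lambda>s. sin (r * s + b)"])
  show "(\<lambda>\<omega>. u \<bullet> X \<omega>) \<in> borel_measurable M" by measurable
  show "(\<lambda>s. sin (r * s + b)) \<in> borel_measurable borel" by measurable
qed (simp_all add: integrable_inner_X tail_moment_orthogonal[OF assms])

text \<open>Turning the frequency vector in the plane of an orthonormal pair does not change
  \<open>E cos (r u\<^sub>\<theta> \<bullet> X + b)\<close>: its \<open>\<theta>\<close>-derivative is an integral of the kind above, with
  \<open>w = r u\<^sub>\<theta>'\<close> orthogonal to \<open>u\<^sub>\<theta>\<close>.\<close>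

lemma integral_cos_rotation_const:
  assumes e: "norm e1 = 1" "norm e2 = 1" "e1 \<bullet> e2 = 0"
  shows "(\<integral>\<omega>. cos (r * ((cos \<theta> *\<^sub>R e1 + sin \<theta> *\<^sub>R e2) \<bullet> X \<omega>) + b) \<partial>M)
       = (\<integral>\<omega>. cos (r * (e1 \<bullet> X \<omega>) + b) \<partial>M)"
proof -
  define u u' where "u \<theta> = cos \<theta> *\<^sub>R e1 + sin \<theta> *\<^sub>R e2"
    and "u' \<theta> = - sin \<theta> *\<^sub>R e1 + cos \<theta> *\<^sub>R e2" for \<theta>
  define f where "f \<theta> \<omega> = cos (r * (u \<theta> \<bullet> X \<omega>) + b)" for \<theta> \<omega>
  define f' where "f' \<theta> \<omega> = - ((r *\<^sub>R u' \<theta>) \<bullet> X \<omega>) * sin (r * (u \<theta> \<bullet> X \<omega>) + b)" for \<theta> \<omega>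
  have e': "e1 \<bullet> e1 = 1" "e2 \<bullet> e2 = 1" "e2 \<bullet> e1 = 0"
    using e by (simp_all add: dot_square_norm inner_commute)
  have "u \<theta> \<bullet> u \<theta> = 1" "u' \<theta> \<bullet> u' \<theta> = 1" and orth: "u' \<theta> \<bullet> u \<theta> = 0" for \<theta>
    using e' e(3) by (simp_all add: u_def u'_def inner_add_left inner_add_right algebra_simps
        flip: power2_eq_square)
  then have norm_u: "norm (u \<theta>) = 1" and norm_u': "norm (u' \<theta>) = 1" for \<theta>
    by (simp_all add: norm_eq_sqrt_inner)
  have "f \<theta> \<in> borel_measurable M" for \<theta>
    unfolding f_def by measurable
  then have f: "integrable M (f \<theta>)" for \<theta>
    by (rule integrable_const_bound[where B=1, rotated]) (simp add: f_def)
  have f': "f' \<theta> \<in> borel_measurable M" for \<theta>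
    unfolding f'_def by measurable
  have deriv: "((\<lambda>\<theta>. f \<theta> \<omega>) has_real_derivative f' \<theta> \<omega>) (at \<theta>)" for \<theta> \<omega>
    unfolding f_def f'_def u_def u'_def
    by (auto intro!: derivative_eq_intros simp: inner_add_left algebra_simps)
  have dominated: "\<bar>f' \<theta> \<omega>\<bar> \<le> \<bar>r\<bar> * norm (X \<omega>)" for \<theta> \<omega>
  proof -
    have "\<bar>f' \<theta> \<omega>\<bar> \<le> \<bar>(r *\<^sub>R u' \<theta>) \<bullet> X \<omega>\<bar>"
      unfolding f'_def abs_mult abs_minus_cancel by (intro mult_right_le_one_le) simp_all
    also have "\<dots> \<le> \<bar>r\<bar> * norm (X \<omega>)"
      using Cauchy_Schwarz_ineq2[of "r *\<^sub>R u' \<theta>" "X \<omega>"] norm_u' by simp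
    finally show ?thesis .
  qed
  have "((\<lambda>\<theta>. \<integral>\<omega>. f \<theta> \<omega> \<partial>M) has_real_derivative 0) (at \<theta>)" for \<theta>
  proof -
    have "(r *\<^sub>R u' \<theta>) \<bullet> u \<theta> = 0" using orth by simp
    from integral_orthogonal_sin_eq_0[OF norm_u this]
    have "(\<integral>\<omega>. f' \<theta> \<omega> \<partial>M) = 0" by (simp add: f'_def)
    moreover have "integrable M (\<lambda>\<omega>. \<bar>r\<bar> * norm (X \<omega>))" using integrable_norm_X by simp
    note has_real_derivative_integral[OF f f' deriv dominated this, of \<theta>]
    ultimately show ?thesis by simp
  qed
  then have "\<forall>\<theta>. ((\<lambda>\<theta>. \<integral>\<omega>. f \<theta> \<omega> \<partial>M) has_real_derivative 0) (at \<theta>)" by blast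
  then have "(\<integral>\<omega>. f \<theta> \<omega> \<partial>M) = (\<integral>\<omega>. f 0 \<omega> \<partial>M)" by (rule DERIV_isconst_all)
  then show ?thesis by (simp add: f_def u_def)
qed

lemma integral_cos_inner_eq:
  assumes "CARD('d) \<ge> 2" "norm s = norm t"
  shows "(\<integral>\<omega>. cos (s \<bullet> X \<omega> + b) \<partial>M) = (\<integral>\<omega>. cos (t \<bullet> X \<omega> + b) \<partial>M)"
proof (cases "t = 0")
  case False
  obtain e1 e2 \<theta> where e: "norm e1 = 1" "norm e2 = 1" "e1 \<bullet> e2 = 0"
    and t: "t = norm t *\<^sub>R e1" and s: "s = norm t *\<^sub>R (cos \<theta> *\<^sub>R e1 + sin \<theta> *\<^sub>R e2)"
    using exists_rotation_angle[OF _ assms(2) False] assms(1) by auto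
  have "(\<integral>\<omega>. cos (s \<bullet> X \<omega> + b) \<partial>M)
      = (\<integral>\<omega>. cos (norm t * ((cos \<theta> *\<^sub>R e1 + sin \<theta> *\<^sub>R e2) \<bullet> X \<omega>) + b) \<partial>M)"
    by (subst s) simp
  also have "\<dots> = (\<integral>\<omega>. cos (norm t * (e1 \<bullet> X \<omega>) + b) \<partial>M)"
    by (rule integral_cos_rotation_const[OF e])
  also have "\<dots> = (\<integral>\<omega>. cos (t \<bullet> X \<omega> + b) \<partial>M)"
    by (subst (2) t) simp
  finally show ?thesis .
qed (use assms in simp)

end

lemma orthogonal_transformation_reflect:
  fixes n :: "'a::real_inner"
  assumes "norm n = 1"
  shows "orthogonal_transformation (\<lambda>x. x - (2 * (n \<bullet> x)) *\<^sub>R n)"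
  unfolding orthogonal_transformation_def
proof
  show "linear (\<lambda>x. x - (2 * (n \<bullet> x)) *\<^sub>R n)"
    by (rule linearI) (simp_all add: inner_add_right distrib_left scaleR_add_left
        scaleR_right_diff_distrib)
  have "n \<bullet> n = 1" using assms by (simp add: dot_square_norm)
  then show "\<forall>v x. (v - (2 * (n \<bullet> v)) *\<^sub>R n) \<bullet> (x - (2 * (n \<bullet> x)) *\<^sub>R n) = v \<bullet> x"
    by (simp add: inner_diff_left inner_diff_right inner_commute)
qed

lemma integral_orthogonal_transformation_eq:
  fixes X :: "'a \<Rightarrow> real^'d" and h :: "real^'d \<Rightarrow> real^'d" and F :: "real^'d \<Rightarrow> real"
  assumes "spherically_symmetric M X" "X \<in> borel_measurable M"
    and "orthogonal_transformation h" "F \<in> borel_measurable borel"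
  shows "(\<integral>\<omega>. F (h (X \<omega>)) \<partial>M) = (\<integral>\<omega>. F (X \<omega>) \<partial>M)"
proof -
  have h: "linear h" "orthogonal_matrix (matrix h)"
    using assms(3) by (simp_all add: orthogonal_transformation_matrix)
  then have h_eq: "matrix h *v x = h x" for x by (simp add: matrix_works)
  have "h \<in> borel_measurable borel"
    using h(1) by (intro borel_measurable_continuous_onI linear_continuous_on)
      (simp add: linear_conv_bounded_linear)
  then have hX: "(\<lambda>\<omega>. h (X \<omega>)) \<in> borel_measurable M" using assms(2) by measurable
  have "distr M borel (\<lambda>\<omega>. matrix h *v X \<omega>) = distr M borel X"
    using assms(1) h(2) unfolding spherically_symmetric_def by blast
  then have "distr M borel (\<lambda>\<omega>. h (X \<omega>)) = distr M borel X" by (simp only: h_eq)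
  then have "(\<integral>x. F x \<partial>distr M borel (\<lambda>\<omega>. h (X \<omega>))) = (\<integral>x. F x \<partial>distr M borel X)" by simp
  then show ?thesis
    using integral_distr[OF hX assms(4)] integral_distr[OF assms(2,4)] by simp
qed

text \<open>The reflection along the unit vector \<open>n\<close> in direction \<open>v - (v \<bullet> u) u\<close> fixes
  \<open>u \<bullet> x\<close> and negates \<open>n \<bullet> x\<close>.\<close>

lemma tail_moments_vanish_if_spherically_symmetric:
  fixes X :: "'a \<Rightarrow> real^'d"
  assumes "spherically_symmetric M X" "X \<in> borel_measurable M" "norm u = 1"
  shows "(\<integral>\<omega>. ((v - (v \<bullet> u) *\<^sub>R u) \<bullet> X \<omega>) * indicator {\<omega>. u \<bullet> X \<omega> \<ge> c} \<omega> \<partial>M) = 0"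
proof (cases "v - (v \<bullet> u) *\<^sub>R u = 0")
  case False
  define w where "w = v - (v \<bullet> u) *\<^sub>R u"
  define n where "n = w /\<^sub>R norm w"
  define F where "F x = (n \<bullet> x) * indicator {y. u \<bullet> y \<ge> c} x" for x :: "real^'d"
  have "w \<noteq> 0" using False by (simp add: w_def)
  have "u \<bullet> w = 0"
    using assms(3) by (simp add: w_def inner_diff_right dot_square_norm inner_commute)
  then have n: "norm n = 1" "n \<bullet> n = 1" "u \<bullet> n = 0"
    using \<open>w \<noteq> 0\<close> by (simp_all add: n_def dot_square_norm)
  have "F (x - (2 * (n \<bullet> x)) *\<^sub>R n) = - F x" for x
    using n by (simp add: F_def inner_diff_right indicator_def)
  moreover have "(\<integral>\<omega>. F (X \<omega> - (2 * (n \<bullet> X \<omega>)) *\<^sub>R n) \<partial>M) = (\<integral>\<omega>. F (X \<omega>) \<partial>M)"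
    using assms(1,2) orthogonal_transformation_reflect[OF n(1)]
    by (rule integral_orthogonal_transformation_eq) (simp add: F_def[abs_def])
  ultimately have "(\<integral>\<omega>. F (X \<omega>) \<partial>M) = 0" by simp
  moreover have "w \<bullet> x = norm w * (n \<bullet> x)" for x
    using \<open>w \<noteq> 0\<close> by (simp add: n_def)
  ultimately show ?thesis
    unfolding w_def[symmetric] by (simp add: F_def mult.assoc indicator_def)
qed simp

lemma norm_orthogonal_matrix_vector_mul:
  fixes \<Gamma> :: "real^'n^'n"
  assumes "orthogonal_matrix \<Gamma>"
  shows "norm (\<Gamma> *v x) = norm x"
proof -
  have "orthogonal_transformation ((*v) \<Gamma>)"
    unfolding orthogonal_transformation_matrix
    using assms by (simp add: matrix_vector_mul_linear matrix_of_matrix_vector_mul)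
  then show ?thesis by (rule orthogonal_transformation_norm)
qed

lemma spherically_symmetric_if_tail_moments_vanish:
  fixes X :: "'a \<Rightarrow> real^'d"
  assumes "vanishing_tail_moments M X" "CARD('d) \<ge> 2"
  shows "spherically_symmetric M X"
  unfolding spherically_symmetric_def
proof (intro allI impI)
  interpret vanishing_tail_moments M X by fact
  fix \<Gamma> :: "real^'d^'d" assume "orthogonal_matrix \<Gamma>"
  have \<Gamma>X: "(\<lambda>\<omega>. \<Gamma> *v X \<omega>) \<in> borel_measurable M"
    by (intro measurable_compose[OF measurable_X] borel_measurable_continuous_onI
        linear_continuous_on matrix_vector_mul_bounded_linear)
  show "distr M borel (\<lambda>\<omega>. \<Gamma> *v X \<omega>) = distr M borel X"
  proof (rule measure_eq_if_cos_integrals_eq)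
    fix t :: "real^'d" and b :: real
    have "t \<bullet> (\<Gamma> *v x) = (transpose \<Gamma> *v t) \<bullet> x" for x
      by (simp add: dot_lmul_matrix transpose_matrix_vector)
    then have "(\<integral>\<omega>. cos (t \<bullet> (\<Gamma> *v X \<omega>) + b) \<partial>M)
        = (\<integral>\<omega>. cos ((transpose \<Gamma> *v t) \<bullet> X \<omega> + b) \<partial>M)"
      by simp
    also have "\<dots> = (\<integral>\<omega>. cos (t \<bullet> X \<omega> + b) \<partial>M)"
      using \<open>orthogonal_matrix \<Gamma>\<close>
      by (intro integral_cos_inner_eq[OF assms(2)] norm_orthogonal_matrix_vector_mul) simp
    finally show "(\<integral>x. cos (t \<bullet> x + b) \<partial>distr M borel (\<lambda>\<omega>. \<Gamma> *v X \<omega>))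
        = (\<integral>x. cos (t \<bullet> x + b) \<partial>distr M borel X)"
      by (simp add: integral_distr[OF \<Gamma>X] integral_distr[OF measurable_X])
  qed (simp_all add: \<Gamma>X prob_space_distr)
qed

theorem lemma2p1:
  fixes M :: "'a measure" and X :: "'a \<Rightarrow> real^'d"
  assumes "prob_space M"
    and "CARD('d) \<ge> 2"
    and "X \<in> borel_measurable M"
    and "integrable M (\<lambda>\<omega>. norm (X \<omega>))"
  shows "spherically_symmetric M X \<longleftrightarrow>
    (\<forall>(c::real) (u::real^'d) (v::real^'d). norm u = 1 \<longrightarrow> norm v = 1 \<longrightarrow>
       (\<integral>\<omega>. ((v - (v \<bullet> u) *\<^sub>R u) \<bullet> X \<omega>) * indicator {\<omega>. u \<bullet> X \<omega> \<ge> c} \<omega> \<partial>M) = 0)"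
proof
  assume "spherically_symmetric M X"
  then show "\<forall>c u v. norm u = 1 \<longrightarrow> norm v = 1 \<longrightarrow>
      (\<integral>\<omega>. ((v - (v \<bullet> u) *\<^sub>R u) \<bullet> X \<omega>) * indicator {\<omega>. u \<bullet> X \<omega> \<ge> c} \<omega> \<partial>M) = 0"
    using tail_moments_vanish_if_spherically_symmetric assms(3) by blast
next
  assume "\<forall>c u v. norm u = 1 \<longrightarrow> norm v = 1 \<longrightarrow>
      (\<integral>\<omega>. ((v - (v \<bullet> u) *\<^sub>R u) \<bullet> X \<omega>) * indicator {\<omega>. u \<bullet> X \<omega> \<ge> c} \<omega> \<partial>M) = 0"
  then have "vanishing_tail_moments M X"
    using assms(1,3,4) by (simp add: vanishing_tail_moments_def vanishing_tail_moments_axioms_def)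
  then show "spherically_symmetric M X"
    using spherically_symmetric_if_tail_moments_vanish assms(2) by blast
qed

end
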